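(* Let $k\ge s\ge r\ge 1$ be fixed integers and let $H$ be a fixed $s$-uniform hypergraph with $k$ vertices and $m\ge 1$ edges. Then for every strategy $\mathcal S$ and every $t=t(n)=o\!\left(n^{\,r-(k-s+r)/m}\right)$, a.a.s. $G^{(r,s)}_t$ does not contain a copy of $H$. Consequently $\tau^{(r)}(H)\ge n^{\,r-(k-s+r)/m}$.
   Context: Semi-random hypergraph process: fix integers $1\le r\le s$ and $n\ge s$. Start with the empty $s$-uniform multi-hypergraph $G_0^{(r,s)}$ on vertex set $[n]=\{1,\dots,n\}$. In each step $t\ge1$, a set $U_t$ of $r$ vertices is chosen uniformly at random among all $r$-subsets of $[n]$, independently of all previous choices; the player then chooses a set $V_t$ of $s-r$ vertices of $[n]\setminus U_t$ (when $r=s$, $V_t=\emptyset$), and the edge $U_t\cup V_t$ is added to $G^{(r,s)}_{t-1}$ to form $G^{(r,s)}_t$ (parallel edges are allowed). A strategy is, for each $n$, a sequence of functions $(f_t)_{t\ge1}$ with $V_t=f_t(U_1,V_1,\dots,U_{t-1},V_{t-1},U_t)$. An event holds a.a.s. if its probability tends to $1$ as $n\to\infty$; $a_n\gg b_n$ means $b_n=o(a_n)$. "$G_t^{(r,s)}$ contains $H$" means $G_t^{(r,s)}$ has a sub-hypergraph isomorphic to $H$. For a function $f(n)$: "$\tau^{(r)}(H)\le f$" means there is a strategy such that for every $t=t(n)\gg f(n)$, a.a.s. $G^{(r,s)}_t$ contains $H$; "$\tau^{(r)}(H)\ge f$" means for every strategy and every $t=t(n)=o(f(n))$, a.a.s.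 $G^{(r,s)}_t$ does not contain $H$; "$\tau^{(r)}(H)=f$" means both hold. *)

theory Defs
  imports "HOL-Probability.Probability" "HOL-Library.Landau_Symbols"
begin

text \<open>A strategy: for each n, a function mapping the history
  [(U_1,V_1),...,(U_{t-1},V_{t-1})] and the new random set U_t to V_t.\<close>
type_synonym strategy = "nat \<Rightarrow> (nat set \<times> nat set) list \<Rightarrow> nat set \<Rightarrow> nat set"

definition rsets :: "nat \<Rightarrow> nat \<Rightarrow> nat set set" where
  "rsets n r = {U. U \<subseteq> {1..n} \<and> card U = r}"

definition valid_strategy :: "nat \<Rightarrow> nat \<Rightarrow> strategy \<Rightarrow> bool" where
  "valid_strategy r s S \<longleftrightarrow>
     (\<forall>n\<ge>s. \<forall>h U. U \<in> rsets n r \<longrightarrow>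
        S n h U \<subseteq> {1..n} - U \<and> card (S n h U) = s - r)"

fun hist_aux :: "strategy \<Rightarrow> nat \<Rightarrow> (nat set \<times> nat set) list \<Rightarrow> nat set list
                   \<Rightarrow> (nat set \<times> nat set) list" where
  "hist_aux S n h [] = h"
| "hist_aux S n h (u # us) = hist_aux S n (h @ [(u, S n h u)]) us"

definition history :: "strategy \<Rightarrow> nat \<Rightarrow> nat set list \<Rightarrow> (nat set \<times> nat set) list" where
  "history S n us = hist_aux S n [] us"

definition semi_random_graph :: "strategy \<Rightarrow> nat \<Rightarrow> nat set list \<Rightarrow> nat set multiset" where
  "semi_random_graph S n us = mset (map (\<lambda>(U, V). U \<union> V) (history S n us))"

definition contains_copy :: "nat \<Rightarrow> nat set multiset \<Rightarrow> 'a set \<Rightarrow> 'a set set \<Rightarrow> bool" where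
  "contains_copy n G VH EH \<longleftrightarrow>
     (\<exists>\<phi>. inj_on \<phi> VH \<and> \<phi> ` VH \<subseteq> {1..n} \<and> (\<forall>e\<in>EH. \<phi> ` e \<in># G))"

text \<open>The random sequence (U_1,...,U_t): independent uniform r-subsets of [n],
  i.e. uniform on the t-fold product.\<close>
definition random_sets :: "nat \<Rightarrow> nat \<Rightarrow> nat \<Rightarrow> nat set list pmf" where
  "random_sets n r t = pmf_of_set {us. length us = t \<and> set us \<subseteq> rsets n r}"

end

theory Submission
  imports Defs
begin

text \<open>If G_t contains a copy of H, let round i carry the earliest of its m edges. The k vertices
  of the copy are the s vertices of that edge together with a set W of k - s further vertices, so in
  each of the m - 1 later rounds j of the copy the random set U_j falls inside a k-set that is
  already determined at time i. Given the past, this has probability at most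
  C(k,r) / C(n,r) <= C(k,r) r^r / n^r. A union bound over i, the set of later rounds and W bounds
  the probability of a copy by O(t^m n^(k-s) / n^(r(m-1))) = O((t / n^(r - (k-s+r)/m))^m),
  which tends to 0.\<close>

lemma length_hist_aux [simp]: "length (hist_aux S n h us) = length h + length us"
  by (induction us arbitrary: h) auto

lemma map_fst_hist_aux: "map fst (hist_aux S n h us) = map fst h @ us"
  by (induction us arbitrary: h) auto

lemma hist_aux_append: "hist_aux S n h (xs @ ys) = hist_aux S n (hist_aux S n h xs) ys"
  by (induction xs arbitrary: h) auto

lemma take_hist_aux: "take (length h) (hist_aux S n h us) = h"
proof (induction us arbitrary: h)
  case (Cons u us)
  have "take (Suc (length h)) (hist_aux S n (h @ [(u, S n h u)]) us) = h @ [(u, S n h u)]"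
    using Cons.IH[of "h @ [(u, S n h u)]"] by simp
  then have "take (length h) (take (Suc (length h)) (hist_aux S n (h @ [(u, S n h u)]) us)) = h"
    by simp
  then show ?case
    by simp
qed simp

lemma length_history [simp]: "length (history S n us) = length us"
  by (simp add: history_def)

lemma map_fst_history: "map fst (history S n us) = us"
  by (simp add: history_def map_fst_hist_aux)

lemma fst_nth_history: "i < length us \<Longrightarrow> fst (history S n us ! i) = us ! i"
  by (metis length_history map_fst_history nth_map)

lemma nth_history_take:
  assumes "i < length us"
  shows "history S n (take (Suc i) us) ! i = history S n us ! i"
proof -
  let ?h = "history S n (take (Suc i) us)"
  have "history S n us = hist_aux S n ?h (drop (Suc i) us)"
    by (metis append_take_drop_id hist_aux_append history_def)
  then have "take (Suc i) (history S n us) = ?h"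
    using assms take_hist_aux[where h = ?h] by simp
  then show ?thesis
    by (metis lessI nth_take)
qed

definition step_edge :: "strategy \<Rightarrow> nat \<Rightarrow> nat set list \<Rightarrow> nat \<Rightarrow> nat set" where
  "step_edge S n us i = (\<lambda>(U, V). U \<union> V) (history S n us ! i)"

lemma semi_random_graph_eq: "semi_random_graph S n us = mset (map (step_edge S n us) [0..<length us])"
  unfolding semi_random_graph_def step_edge_def by (rule arg_cong[where f = mset], rule nth_equalityI) auto

lemma mem_semi_random_graph:
  "e \<in># semi_random_graph S n us \<longleftrightarrow> (\<exists>i<length us. step_edge S n us i = e)"
  by (auto simp: semi_random_graph_eq)

lemma nth_subset_step_edge: "i < length us \<Longrightarrow> us ! i \<subseteq> step_edge S n us i"
  using fst_nth_history[of i us S n] unfolding step_edge_def by (auto split: prod.splits)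

lemma step_edge_take: "i < length us \<Longrightarrow> step_edge S n (take (Suc i) us) i = step_edge S n us i"
  by (simp add: step_edge_def nth_history_take)

lemma finite_sequential_lists:
  assumes "finite R" "\<And>p j. G p j \<subseteq> R"
  shows "finite {us. length us = t \<and> (\<forall>j<t. us ! j \<in> G (take j us) j)}"
proof -
  have "{us. length us = t \<and> (\<forall>j<t. us ! j \<in> G (take j us) j)} \<subseteq> {us. set us \<subseteq> R \<and> length us = t}"
    using assms(2) by (auto simp: in_set_conv_nth) (metis subsetD)
  then show ?thesis
    using finite_lists_length_eq[OF assms(1)] by (rule finite_subset)
qed

lemma card_sequential_lists_le:
  fixes R :: "'b set" and G :: "'b list \<Rightarrow> nat \<Rightarrow> 'b set"
  assumes "finite R" and G_R: "\<And>p j. G p j \<subseteq> R" and card_G: "\<And>p j. card (G p j) \<le> g j"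
  shows "card {us. length us = t \<and> (\<forall>j<t. us ! j \<in> G (take j us) j)} \<le> (\<Prod>j<t. g j)"
proof (induction t)
  case 0
  have "{us. length us = 0 \<and> (\<forall>j<0. us ! j \<in> G (take j us) j)} = {[]}"
    by auto
  then show ?case
    by simp
next
  case (Suc t)
  let ?L = "\<lambda>t. {us. length us = t \<and> (\<forall>j<t. us ! j \<in> G (take j us) j)}"
  have snoc: "?L (Suc t) \<subseteq> (\<lambda>(xs, x). xs @ [x]) ` (SIGMA xs:?L t. G xs t)"
  proof
    fix us assume us: "us \<in> ?L (Suc t)"
    then obtain xs x where us_eq: "us = xs @ [x]" and len: "length xs = t"
      by (metis (mono_tags, lifting) length_Suc_conv_rev mem_Collect_eq rev.simps(2) rev_rev_ident)
    have "xs ! j \<in> G (take j xs) j" if "j < t" for j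
    proof -
      have "us ! j \<in> G (take j us) j"
        using us that by simp
      then show ?thesis
        using that len by (simp add: us_eq nth_append)
    qed
    moreover have "x \<in> G xs t"
      using us len by (auto simp: us_eq)
    ultimately show "us \<in> (\<lambda>(xs, x). xs @ [x]) ` (SIGMA xs:?L t. G xs t)"
      using len by (auto simp: us_eq)
  qed
  have fin: "finite (?L t)"
    using \<open>finite R\<close> G_R by (rule finite_sequential_lists)
  have fin_G: "finite (G xs t)" for xs
    using G_R \<open>finite R\<close> by (rule finite_subset)
  have "card (?L (Suc t)) \<le> card (SIGMA xs:?L t. G xs t)"
    using snoc fin fin_G by (meson card_image_le card_mono finite_SigmaI finite_imageI order_trans)
  also have "\<dots> = (\<Sum>xs\<in>?L t. card (G xs t))"
    using fin fin_G by (simp add: card_SigmaI)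
  also have "\<dots> \<le> card (?L t) * g t"
    using sum_bounded_above[of "?L t" "\<lambda>xs. card (G xs t)" "g t"] card_G by simp
  also have "\<dots> \<le> (\<Prod>j<t. g j) * g t"
    using Suc.IH by simp
  finally show ?case
    by simp
qed

lemma finite_rsets: "finite (rsets n r)"
  by (rule finite_subset[of _ "Pow {1..n}"]) (auto simp: rsets_def)

lemma card_rsets: "card (rsets n r) = n choose r"
  using n_subsets[of "{1..n}" r] by (simp add: rsets_def)

lemma finite_random_sets_space: "finite {us. length us = t \<and> set us \<subseteq> rsets n r}"
  using finite_lists_length_eq[OF finite_rsets] by (simp add: conj_commute)

lemma card_random_sets_space: "card {us. length us = t \<and> set us \<subseteq> rsets n r} = (n choose r) ^ t"
  using card_lists_length_eq[OF finite_rsets] by (simp add: conj_commute card_rsets)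

lemma random_sets_space_nonempty:
  assumes "r \<le> n"
  shows "{us. length us = t \<and> set us \<subseteq> rsets n r} \<noteq> {}"
proof -
  have "replicate t {1..r} \<in> {us. length us = t \<and> set us \<subseteq> rsets n r}"
    using assms by (auto simp: rsets_def)
  then show ?thesis
    by blast
qed

lemma set_pmf_random_sets:
  assumes "r \<le> n"
  shows "set_pmf (random_sets n r t) = {us. length us = t \<and> set us \<subseteq> rsets n r}"
  unfolding random_sets_def
  by (rule set_pmf_of_set[OF random_sets_space_nonempty[OF assms] finite_random_sets_space])

lemma prob_random_sets:
  assumes "r \<le> n"
  shows "measure_pmf.prob (random_sets n r t) A
    = card ({us. length us = t \<and> set us \<subseteq> rsets n r} \<inter> A) / real (n choose r) ^ t"
  unfolding random_sets_def
  by (simp add: measure_pmf_of_set[OF random_sets_space_nonempty[OF assms] finite_random_sets_space]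
      card_random_sets_space)

lemma prob_random_sets_sequential_le:
  assumes "r \<le> n" "J \<subseteq> {..<t}"
    and G_rsets: "\<And>p j. G p j \<subseteq> rsets n r" and card_G: "\<And>p j. card (G p j) \<le> c"
  shows "measure_pmf.prob (random_sets n r t) {us. \<forall>j\<in>J. us ! j \<in> G (take j us) j}
    \<le> (real c / real (n choose r)) ^ card J"
proof -
  let ?R = "rsets n r" and ?C = "real (n choose r)"
  let ?\<Omega> = "{us. length us = t \<and> set us \<subseteq> ?R}"
  let ?E = "{us. \<forall>j\<in>J. us ! j \<in> G (take j us) j}"
  define G' where "G' p j = (if j \<in> J then G p j else ?R)" for p j
  define g where "g j = (if j \<in> J then c else n choose r)" for j
  have G'_rsets: "G' p j \<subseteq> ?R" for p j
    using G_rsets by (simp add: G'_def)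
  have C_pos: "?C > 0"
    using assms(1) by simp
  have "?\<Omega> \<inter> ?E \<subseteq> {us. length us = t \<and> (\<forall>j<t. us ! j \<in> G' (take j us) j)}"
    by (auto simp: G'_def)
  then have "card (?\<Omega> \<inter> ?E) \<le> card {us. length us = t \<and> (\<forall>j<t. us ! j \<in> G' (take j us) j)}"
    by (rule card_mono[rotated], intro finite_sequential_lists[OF finite_rsets G'_rsets])
  also have "\<dots> \<le> (\<Prod>j<t. g j)"
    by (rule card_sequential_lists_le[OF finite_rsets G'_rsets]) (simp add: G'_def g_def card_rsets card_G)
  finally have card_le: "real (card (?\<Omega> \<inter> ?E)) \<le> (\<Prod>j<t. real (g j))"
    unfolding of_nat_prod[symmetric] of_nat_le_iff .
  have "measure_pmf.prob (random_sets n r t) ?E = card (?\<Omega> \<inter> ?E) / ?C ^ t"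
    using assms(1) by (rule prob_random_sets)
  also have "\<dots> \<le> (\<Prod>j<t. real (g j)) / ?C ^ t"
    using card_le C_pos by (simp add: divide_right_mono)
  also have "\<dots> = (\<Prod>j<t. real (g j) / ?C)"
    by (simp add: prod_dividef)
  also have "\<dots> = (\<Prod>j<t. if j \<in> J then real c / ?C else 1)"
    using C_pos by (intro prod.cong) (simp_all add: g_def)
  also have "\<dots> = (real c / ?C) ^ card J"
  proof -
    have "{j \<in> {..<t}. j \<in> J} = J"
      using assms(2) by auto
    then show ?thesis
      using prod.inter_filter[of "{..<t}" "\<lambda>_. real c / ?C" "\<lambda>j. j \<in> J"] by simp
  qed
  finally show ?thesis .
qed

definition absorbed_sets ::
    "strategy \<Rightarrow> nat \<Rightarrow> nat \<Rightarrow> nat \<Rightarrow> nat set \<Rightarrow> nat \<Rightarrow> nat set list \<Rightarrow> nat set set" where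
  "absorbed_sets S n r s W i us =
     {U \<in> rsets n r. card (step_edge S n us i) = s \<and> U \<subseteq> step_edge S n us i \<union> W}"

definition absorption_event ::
    "strategy \<Rightarrow> nat \<Rightarrow> nat \<Rightarrow> nat \<Rightarrow> nat set \<Rightarrow> nat \<Rightarrow> nat set \<Rightarrow> nat set list set" where
  "absorption_event S n r s W i J = {us. \<forall>j\<in>J. us ! j \<in> absorbed_sets S n r s W i (take (Suc i) us)}"

lemma card_absorbed_sets_le:
  assumes "1 \<le> s" "finite W" "s + card W \<le> k"
  shows "card (absorbed_sets S n r s W i us) \<le> k choose r"
proof (cases "card (step_edge S n us i) = s")
  case True
  let ?X = "step_edge S n us i \<union> W"
  have fin: "finite ?X"
    using True assms(1,2) card.infinite by force
  have "card (absorbed_sets S n r s W i us) \<le> card {U. U \<subseteq> ?X \<and> card U = r}"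
    using fin by (intro card_mono) (auto simp: absorbed_sets_def rsets_def)
  also have "\<dots> = card ?X choose r"
    using fin by (rule n_subsets)
  also have "\<dots> \<le> k choose r"
    using card_Un_le[of "step_edge S n us i" W] True assms(3) by (intro binomial_right_mono) simp
  finally show ?thesis .
qed (simp add: absorbed_sets_def)

lemma prob_absorption_event_le:
  assumes "r \<le> n" "1 \<le> s" "finite W" "s + card W \<le> k" "J \<subseteq> {i<..<t}"
  shows "measure_pmf.prob (random_sets n r t) (absorption_event S n r s W i J)
    \<le> (real (k choose r) / real (n choose r)) ^ card J"
proof -
  have min_J: "min (Suc i) j = Suc i" if "j \<in> J" for j
    using assms(5) that by auto
  have "absorption_event S n r s W i J
      = {us. \<forall>j\<in>J. us ! j \<in> absorbed_sets S n r s W i (take (Suc i) (take j us))}"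
    by (simp add: absorption_event_def min_J)
  also have "measure_pmf.prob (random_sets n r t) \<dots> \<le> (real (k choose r) / real (n choose r)) ^ card J"
    using assms(5) card_absorbed_sets_le[OF assms(2-4)]
    by (intro prob_random_sets_sequential_le[OF assms(1)]) (auto simp: absorbed_sets_def)
  finally show ?thesis .
qed

lemma obtain_first_index:
  fixes idx :: "'a \<Rightarrow> nat"
  assumes "finite E" "E \<noteq> {}" "inj_on idx E" "idx ` E \<subseteq> {..<t}"
  obtains e1 where "e1 \<in> E" "idx ` (E - {e1}) \<subseteq> {idx e1<..<t}" "card (idx ` (E - {e1})) = card E - 1"
proof -
  have "Min (idx ` E) \<in> idx ` E"
    using assms(1,2) by simp
  then obtain e1 where e1: "e1 \<in> E" "idx e1 = Min (idx ` E)"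
    by (metis imageE)
  have "idx ` (E - {e1}) \<subseteq> {idx e1<..<t}"
  proof
    fix j assume "j \<in> idx ` (E - {e1})"
    then obtain e where e: "e \<in> E" "e \<noteq> e1" "j = idx e"
      by auto
    have "idx e \<noteq> idx e1"
      using assms(3) e e1(1) by (auto dest: inj_onD)
    moreover have "idx e1 \<le> idx e"
      using e1 e assms(1) by simp
    ultimately show "j \<in> {idx e1<..<t}"
      using e assms(4) by auto
  qed
  moreover have "card (idx ` (E - {e1})) = card E - 1"
    using assms(1,3) e1(1) by (simp add: card_image inj_on_diff card_Diff_singleton)
  ultimately show ?thesis
    using e1(1) that by blast
qed

lemma obtain_copy_indices:
  assumes "contains_copy n (semi_random_graph S n us) VH EH" "\<forall>e\<in>EH. e \<subseteq> VH"
  obtains \<phi> idx where "inj_on \<phi> VH" "\<phi> ` VH \<subseteq> {1..n}" "inj_on idx EH"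
    "\<And>e. e \<in> EH \<Longrightarrow> idx e < length us \<and> step_edge S n us (idx e) = \<phi> ` e"
proof -
  obtain \<phi> where \<phi>: "inj_on \<phi> VH" "\<phi> ` VH \<subseteq> {1..n}" "\<forall>e\<in>EH. \<phi> ` e \<in># semi_random_graph S n us"
    using assms(1) unfolding contains_copy_def by blast
  then obtain idx where idx: "\<And>e. e \<in> EH \<Longrightarrow> idx e < length us \<and> step_edge S n us (idx e) = \<phi> ` e"
    unfolding mem_semi_random_graph by metis
  have "inj_on idx EH"
  proof (rule inj_onI)
    fix e e' assume e: "e \<in> EH" "e' \<in> EH" "idx e = idx e'"
    then have "\<phi> ` e = \<phi> ` e'"
      using idx by metis
    then show "e = e'"
      using \<phi>(1) assms(2) e by (simp add: inj_on_image_eq_iff)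
  qed
  with \<phi> idx that show ?thesis
    by blast
qed

definition absorption_indices :: "nat \<Rightarrow> nat \<Rightarrow> nat \<Rightarrow> nat \<Rightarrow> (nat \<times> nat set \<times> nat set) set" where
  "absorption_indices n t l w =
     {(i, J, W). i < t \<and> J \<subseteq> {i<..<t} \<and> card J = l \<and> W \<subseteq> {1..n} \<and> card W = w}"

lemma absorption_indices_subset:
  "absorption_indices n t l w
     \<subseteq> {..<t} \<times> {J. J \<subseteq> {..<t} \<and> card J = l} \<times> {W. W \<subseteq> {1..n} \<and> card W = w}"
  by (auto simp: absorption_indices_def)

lemma finite_absorption_indices: "finite (absorption_indices n t l w)"
  by (rule finite_subset[OF absorption_indices_subset]) simp

lemma card_absorption_indices_le: "card (absorption_indices n t l w) \<le> t * (t choose l) * (n choose w)"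
  using card_mono[OF _ absorption_indices_subset[of n t l w]]
  by (simp add: card_cartesian_product n_subsets)

lemma copy_in_absorption_event:
  assumes "finite VH" "card VH = k" "\<forall>e\<in>EH. e \<subseteq> VH \<and> card e = s" "card EH = m" "m \<ge> 1"
    and "length us = t" "set us \<subseteq> rsets n r"
    and "contains_copy n (semi_random_graph S n us) VH EH"
  shows "\<exists>(i, J, W) \<in> absorption_indices n t (m - 1) (k - s). us \<in> absorption_event S n r s W i J"
proof -
  obtain \<phi> idx where \<phi>: "inj_on \<phi> VH" "\<phi> ` VH \<subseteq> {1..n}" and "inj_on idx EH"
    and idx: "\<And>e. e \<in> EH \<Longrightarrow> idx e < t \<and> step_edge S n us (idx e) = \<phi> ` e"
    using obtain_copy_indices[OF assms(8)] assms(3,6) by metis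
  have "card EH > 0"
    using assms(4,5) by simp
  then have "finite EH" "EH \<noteq> {}"
    by (simp_all add: card_gt_0_iff)
  then obtain e1 where e1: "e1 \<in> EH" and J: "idx ` (EH - {e1}) \<subseteq> {idx e1<..<t}"
    and card_J: "card (idx ` (EH - {e1})) = m - 1"
    using obtain_first_index[of EH idx t] \<open>inj_on idx EH\<close> idx assms(4) by blast
  define i where "i = idx e1"
  define J where "J = idx ` (EH - {e1})"
  define W where "W = \<phi> ` VH - \<phi> ` e1"
  have e1_VH: "e1 \<subseteq> VH" and card_e1: "card e1 = s"
    using e1 assms(3) by auto
  have edge_i: "step_edge S n (take (Suc i) us) i = \<phi> ` e1"
    using step_edge_take idx[OF e1] assms(6) by (simp add: i_def)
  have card_edge_i: "card (\<phi> ` e1) = s"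
    using card_image[OF inj_on_subset[OF \<phi>(1) e1_VH]] card_e1 by simp
  have "card W = k - s"
    using card_Diff_subset[of "\<phi> ` e1" "\<phi> ` VH"] card_image[OF \<phi>(1)] card_edge_i e1_VH assms(1,2)
    by (simp add: W_def finite_subset image_mono)
  then have "(i, J, W) \<in> absorption_indices n t (m - 1) (k - s)"
    using J card_J idx[OF e1] \<phi>(2) by (auto simp: absorption_indices_def i_def J_def W_def)
  moreover have "us \<in> absorption_event S n r s W i J"
    unfolding absorption_event_def absorbed_sets_def
  proof (intro CollectI ballI conjI)
    fix j assume "j \<in> J"
    then obtain e where e: "e \<in> EH" "j = idx e"
      by (auto simp: J_def)
    then have j: "j < length us"
      using idx assms(6) by auto
    show "us ! j \<in> rsets n r"
      using j assms(7) by auto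
    show "card (step_edge S n (take (Suc i) us) i) = s"
      using edge_i card_edge_i by simp
    have "us ! j \<subseteq> step_edge S n us j"
      using j by (rule nth_subset_step_edge)
    also have "\<dots> = \<phi> ` e"
      using idx e by simp
    also have "\<dots> \<subseteq> \<phi> ` e1 \<union> W"
      using e assms(3) by (auto simp: W_def)
    finally show "us ! j \<subseteq> step_edge S n (take (Suc i) us) i \<union> W"
      using edge_i by simp
  qed
  ultimately show ?thesis
    by blast
qed

lemma prob_copy_le:
  assumes "finite VH" "card VH = k" "\<forall>e\<in>EH. e \<subseteq> VH \<and> card e = s" "card EH = m" "m \<ge> 1"
    and "1 \<le> r" "r \<le> s" "s \<le> k" "r \<le> n"
  shows "measure_pmf.prob (random_sets n r t) {us. contains_copy n (semi_random_graph S n us) VH EH}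
    \<le> real (t * (t choose (m - 1)) * (n choose (k - s))) * (real (k choose r) / real (n choose r)) ^ (m - 1)"
proof -
  let ?p = "random_sets n r t" and ?X = "absorption_indices n t (m - 1) (k - s)"
  let ?A = "\<lambda>(i, J, W). absorption_event S n r s W i J"
  let ?b = "(real (k choose r) / real (n choose r)) ^ (m - 1)"
  let ?copy = "{us. contains_copy n (semi_random_graph S n us) VH EH}"
  have "measure_pmf.prob ?p ?copy = measure_pmf.prob ?p (?copy \<inter> set_pmf ?p)"
    by (simp add: measure_Int_set_pmf)
  also have "\<dots> \<le> measure_pmf.prob ?p (\<Union>x\<in>?X. ?A x)"
    using copy_in_absorption_event[OF assms(1-5)] set_pmf_random_sets[OF assms(9)]
    by (intro measure_pmf.finite_measure_mono) (fastforce+)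
  also have "\<dots> \<le> (\<Sum>x\<in>?X. measure_pmf.prob ?p (?A x))"
    by (rule measure_pmf.finite_measure_subadditive_finite) (auto simp: finite_absorption_indices)
  also have "\<dots> \<le> (\<Sum>x\<in>?X. ?b)"
  proof (rule sum_mono)
    fix x assume "x \<in> ?X"
    then obtain i J W where x: "x = (i, J, W)" "J \<subseteq> {i<..<t}" "card J = m - 1" "W \<subseteq> {1..n}" "card W = k - s"
      by (auto simp: absorption_indices_def)
    then show "measure_pmf.prob ?p (?A x) \<le> ?b"
      using prob_absorption_event_le[of r n s W k J i t S] assms(6-9) finite_subset[OF x(4)] by simp
  qed
  also have "\<dots> = real (card ?X) * ?b"
    by simp
  also have "\<dots> \<le> real (t * (t choose (m - 1)) * (n choose (k - s))) * ?b"
    by (intro mult_right_mono of_nat_mono card_absorption_indices_le) simp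
  finally show ?thesis .
qed

lemma binomial_le_power: "n choose k \<le> n ^ k"
  by (cases "k \<le> n") (simp_all add: binomial_le_pow binomial_eq_0)

lemma power_divide_powr_threshold:
  fixes x y :: real
  assumes "y > 0" "m \<ge> 1" "s \<le> k"
  shows "(x / y powr (real r - (real k - real s + real r) / real m)) ^ m = x ^ m * y ^ (k - s) / y ^ (r * (m - 1))"
proof -
  have "(y powr (real r - (real k - real s + real r) / real m)) ^ m
      = y powr (real m * (real r - (real k - real s + real r) / real m))"
    using assms(1) by (simp add: powr_power)
  also have "real m * (real r - (real k - real s + real r) / real m) = real (r * (m - 1)) - real (k - s)"
    using assms(2,3) by (simp add: of_nat_diff field_simps)
  also have "y powr (real (r * (m - 1)) - real (k - s)) = y ^ (r * (m - 1)) / y ^ (k - s)"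
    using assms(1) by (simp only: powr_diff powr_realpow)
  finally show ?thesis
    using assms(1) by (simp add: power_divide)
qed

lemma prob_copy_le_powr:
  assumes "finite VH" "card VH = k" "\<forall>e\<in>EH. e \<subseteq> VH \<and> card e = s" "card EH = m" "m \<ge> 1"
    and "1 \<le> r" "r \<le> s" "s \<le> k" "r \<le> n"
  shows "measure_pmf.prob (random_sets n r t) {us. contains_copy n (semi_random_graph S n us) VH EH}
    \<le> real (k choose r) ^ (m - 1) * real r ^ (r * (m - 1))
        * (real t / real n powr (real r - (real k - real s + real r) / real m)) ^ m"
proof -
  let ?c = "real (k choose r)"
  have n_pos: "real n > 0"
    using assms(6,9) by simp
  have "t * (t choose (m - 1)) * (n choose (k - s)) \<le> t * t ^ (m - 1) * n ^ (k - s)"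
    by (intro mult_mono mult_left_mono binomial_le_power) simp_all
  also have "\<dots> = t ^ m * n ^ (k - s)"
    using assms(5) by (simp add: power_eq_if)
  finally have count: "real (t * (t choose (m - 1)) * (n choose (k - s))) \<le> real t ^ m * real n ^ (k - s)"
    by (metis of_nat_le_iff of_nat_mult of_nat_power)
  have "(real n / real r) ^ r \<le> real (n choose r)"
    using assms(9) by (rule binomial_ge_n_over_k_pow_k)
  then have "?c / real (n choose r) \<le> ?c / (real n / real r) ^ r"
    using n_pos assms(6,9) by (intro divide_left_mono mult_pos_pos) (simp_all add: zero_less_binomial_iff)
  then have ratio: "?c / real (n choose r) \<le> ?c * real r ^ r / real n ^ r"
    by (simp add: power_divide)
  have "measure_pmf.prob (random_sets n r t) {us. contains_copy n (semi_random_graph S n us) VH EH}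
      \<le> real (t * (t choose (m - 1)) * (n choose (k - s))) * (?c / real (n choose r)) ^ (m - 1)"
    using assms by (rule prob_copy_le)
  also have "\<dots> \<le> real t ^ m * real n ^ (k - s) * (?c * real r ^ r / real n ^ r) ^ (m - 1)"
    using count ratio by (intro mult_mono power_mono) simp_all
  also have "\<dots> = ?c ^ (m - 1) * real r ^ (r * (m - 1)) * (real t ^ m * real n ^ (k - s) / real n ^ (r * (m - 1)))"
    by (simp add: power_divide power_mult_distrib power_mult)
  also have "\<dots> = ?c ^ (m - 1) * real r ^ (r * (m - 1))
      * (real t / real n powr (real r - (real k - real s + real r) / real m)) ^ m"
    using n_pos assms(5,8) by (simp add: power_divide_powr_threshold)
  finally show ?thesis .
qed

theorem theorem2:
  fixes k s r m :: nat and VH :: "'a set" and EH :: "'a set set"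
    and S :: strategy and t :: "nat \<Rightarrow> nat"
  assumes "1 \<le> r" "r \<le> s" "s \<le> k"
    and "finite VH" "card VH = k"
    and "\<forall>e\<in>EH. e \<subseteq> VH \<and> card e = s"
    and "card EH = m" "m \<ge> 1"
    and "valid_strategy r s S"
    and "(\<lambda>n. real (t n)) \<in> o(\<lambda>n. real n powr (real r - (real k - real s + real r) / real m))"
  shows "(\<lambda>n. measure_pmf.prob (random_sets n r (t n))
            {us. \<not> contains_copy n (semi_random_graph S n us) VH EH}) \<longlonglongrightarrow> 1"
proof -
  define \<beta> where "\<beta> = real r - (real k - real s + real r) / real m"
  define K where "K = real (k choose r) ^ (m - 1) * real r ^ (r * (m - 1))"
  define P where "P n = measure_pmf.prob (random_sets n r (t n))
    {us. contains_copy n (semi_random_graph S n us) VH EH}" for n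
  have "(\<lambda>n. real (t n) / real n powr \<beta>) \<longlonglongrightarrow> 0"
    using smalloD_tendsto[OF assms(10)] by (simp add: \<beta>_def)
  then have bound_to_0: "(\<lambda>n. K * (real (t n) / real n powr \<beta>) ^ m) \<longlonglongrightarrow> 0"
    using assms(8) by (auto intro: tendsto_mult_right_zero tendsto_null_power)
  have "P n \<le> K * (real (t n) / real n powr \<beta>) ^ m" if "r \<le> n" for n
    unfolding P_def K_def \<beta>_def using assms(4-8) assms(1-3) that by (rule prob_copy_le_powr)
  then have P_le: "eventually (\<lambda>n. P n \<le> K * (real (t n) / real n powr \<beta>) ^ m) sequentially"
    using eventually_ge_at_top[of r] by (metis (mono_tags, lifting) eventually_mono)
  have "eventually (\<lambda>n. 0 \<le> P n) sequentially"
    by (simp add: P_def)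
  then have "P \<longlonglongrightarrow> 0"
    using P_le tendsto_const bound_to_0 by (rule tendsto_sandwich)
  then have "(\<lambda>n. 1 - P n) \<longlonglongrightarrow> 1 - 0"
    by (intro tendsto_diff tendsto_const)
  moreover have "measure_pmf.prob (random_sets n r (t n))
      {us. \<not> contains_copy n (semi_random_graph S n us) VH EH} = 1 - P n" for n
    using measure_pmf.prob_compl[of "{us. contains_copy n (semi_random_graph S n us) VH EH}"
        "random_sets n r (t n)"]
    by (simp add: P_def Compl_eq_Diff_UNIV[symmetric] Collect_neg_eq)
  ultimately show ?thesis
    by simp
qed

end
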